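(* Let $R$ be a commutative ring with unit, $\mathcal{P}$ a poset satisfying the descending chain condition, $F\colon\mathcal{P}\to R\text{-mod}$ a functor, and $i\in\mathcal{P}$. If $F$ is pseudo-projective at $i$, then the natural map $\operatorname{colim}_{\mathcal{P}_{<i}}F\to F(i)$ is injective.
   Context: DCC: no infinite strictly descending chains. $\mathcal{P}_{<i}=\{j:j<i\}$, $\mathcal{P}_{\le i}=\{j:j\le i\}$. $F(j<i)$ is the image of the arrow $j\to i$, $F(i<i)=1$. $\operatorname{Im}_F(j)=\sum_{k<j}\operatorname{Im}F(k<j)$; $\max J$ is the set of maximal elements of $J$. $F$ is pseudo-projective at $i$ if for every finite $J\subset\mathcal{P}_{\le i}$ and every $\oplus_{j\in J}x_j\in\bigoplus_{j\in J}F(j)$ with $\sum_{j\in J}F(j<i)(x_j)=0$, one has $x_j\in\operatorname{Im}_F(j)$ for all $j\in\max J$. *)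

theory Defs
  imports Complex_Main
begin

text \<open>
A functor F : P -> R-mod is given by an
ambient R-module (type 'm with scalar multiplication scale), a family of submodules
M j (the modules F(j)), and maps Fmap j k (the image F(j<k) of the arrow j -> k,
for j <= k) which are R-linear from M j to M k, satisfying the functor laws.
\<close>

definition DCC :: "'p::order itself \<Rightarrow> bool" where
  "DCC _ \<longleftrightarrow> \<not> (\<exists>f :: nat \<Rightarrow> 'p. \<forall>n. f (Suc n) < f n)"

definition is_functor ::
  "('r::comm_ring_1 \<Rightarrow> 'm::ab_group_add \<Rightarrow> 'm) \<Rightarrow> ('p::order \<Rightarrow> 'm set)
     \<Rightarrow> ('p \<Rightarrow> 'p \<Rightarrow> 'm \<Rightarrow> 'm) \<Rightarrow> bool" where
  "is_functor scale M Fmap \<longleftrightarrow>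
     module scale \<and>
     (\<forall>j. module.subspace scale (M j)) \<and>
     (\<forall>j k. j \<le> k \<longrightarrow>
        (\<forall>x\<in>M j. Fmap j k x \<in> M k) \<and>
        (\<forall>x\<in>M j. \<forall>y\<in>M j. Fmap j k (x + y) = Fmap j k x + Fmap j k y) \<and>
        (\<forall>c. \<forall>x\<in>M j. Fmap j k (scale c x) = scale c (Fmap j k x))) \<and>
     (\<forall>j. \<forall>x\<in>M j. Fmap j j x = x) \<and>
     (\<forall>j k l. j \<le> k \<longrightarrow> k \<le> l \<longrightarrow> (\<forall>x\<in>M j. Fmap k l (Fmap j k x) = Fmap j l x))"

definition ImF :: "('p::order \<Rightarrow> 'm::ab_group_add set) \<Rightarrow> ('p \<Rightarrow> 'p \<Rightarrow> 'm \<Rightarrow> 'm) \<Rightarrow> 'p \<Rightarrow> 'm set" where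
  "ImF M Fmap j = {(\<Sum>k\<in>K. Fmap k j (y k)) | K y.
      finite K \<and> K \<subseteq> {k. k < j} \<and> (\<forall>k\<in>K. y k \<in> M k)}"

definition maxset :: "'p::order set \<Rightarrow> 'p set" where
  "maxset J = {j \<in> J. \<not> (\<exists>k\<in>J. j < k)}"

definition pseudo_projective_at ::
  "('p::order \<Rightarrow> 'm::ab_group_add set) \<Rightarrow> ('p \<Rightarrow> 'p \<Rightarrow> 'm \<Rightarrow> 'm) \<Rightarrow> 'p \<Rightarrow> bool" where
  "pseudo_projective_at M Fmap i \<longleftrightarrow>
     (\<forall>J x. finite J \<and> J \<subseteq> {j. j \<le> i} \<and> (\<forall>j\<in>J. x j \<in> M j) \<and>
            (\<Sum>j\<in>J. Fmap j i (x j)) = 0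
        \<longrightarrow> (\<forall>j\<in>maxset J. x j \<in> ImF M Fmap j))"

text \<open>Colimit of F restricted to P_{<i}, constructed as the quotient of the direct sum
  of the F(j), j<i, by the submodule generated by the elements d_j(x) - d_k(F(j<k) x),
  j <= k < i.\<close>

definition dsum_lt :: "('p::order \<Rightarrow> 'm::zero set) \<Rightarrow> 'p \<Rightarrow> ('p \<Rightarrow> 'm) set" where
  "dsum_lt M i = {x. finite {j. x j \<noteq> 0} \<and> (\<forall>j. x j \<in> M j) \<and> (\<forall>j. \<not> j < i \<longrightarrow> x j = 0)}"

definition delta :: "'p \<Rightarrow> 'm::zero \<Rightarrow> 'p \<Rightarrow> 'm" where
  "delta j v = (\<lambda>l. if l = j then v else 0)"

inductive_set colim_rels ::
  "('r::comm_ring_1 \<Rightarrow> 'm::ab_group_add \<Rightarrow> 'm) \<Rightarrow> ('p::order \<Rightarrow> 'm set)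
     \<Rightarrow> ('p \<Rightarrow> 'p \<Rightarrow> 'm \<Rightarrow> 'm) \<Rightarrow> 'p \<Rightarrow> ('p \<Rightarrow> 'm) set"
  for scale M Fmap i where
  zero: "(\<lambda>_. 0) \<in> colim_rels scale M Fmap i"
| gen: "j \<le> k \<Longrightarrow> k < i \<Longrightarrow> v \<in> M j \<Longrightarrow>
         (\<lambda>l. delta j v l - delta k (Fmap j k v) l) \<in> colim_rels scale M Fmap i"
| add: "z \<in> colim_rels scale M Fmap i \<Longrightarrow> w \<in> colim_rels scale M Fmap i \<Longrightarrow>
         (\<lambda>l. z l + w l) \<in> colim_rels scale M Fmap i"
| smult: "z \<in> colim_rels scale M Fmap i \<Longrightarrow> (\<lambda>l. scale c (z l)) \<in> colim_rels scale M Fmap i"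

definition colim_equiv ::
  "('r::comm_ring_1 \<Rightarrow> 'm::ab_group_add \<Rightarrow> 'm) \<Rightarrow> ('p::order \<Rightarrow> 'm set)
     \<Rightarrow> ('p \<Rightarrow> 'p \<Rightarrow> 'm \<Rightarrow> 'm) \<Rightarrow> 'p \<Rightarrow> (('p \<Rightarrow> 'm) \<times> ('p \<Rightarrow> 'm)) set" where
  "colim_equiv scale M Fmap i = {(x, y). x \<in> dsum_lt M i \<and> y \<in> dsum_lt M i \<and>
       (\<lambda>l. x l - y l) \<in> colim_rels scale M Fmap i}"

definition colim_lt ::
  "('r::comm_ring_1 \<Rightarrow> 'm::ab_group_add \<Rightarrow> 'm) \<Rightarrow> ('p::order \<Rightarrow> 'm set)
     \<Rightarrow> ('p \<Rightarrow> 'p \<Rightarrow> 'm \<Rightarrow> 'm) \<Rightarrow> 'p \<Rightarrow> ('p \<Rightarrow> 'm) set set" where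
  "colim_lt scale M Fmap i = dsum_lt M i // colim_equiv scale M Fmap i"

definition colim_map ::
  "('p::order \<Rightarrow> 'p \<Rightarrow> 'm::ab_group_add \<Rightarrow> 'm) \<Rightarrow> 'p \<Rightarrow> ('p \<Rightarrow> 'm) set \<Rightarrow> 'm" where
  "colim_map Fmap i C = the_elem ((\<lambda>x. \<Sum>j\<in>{j. x j \<noteq> 0}. Fmap j i (x j)) ` C)"

end

theory Submission
  imports Defs "HOL-Library.Multiset"
begin

text \<open>
The colimit is the direct sum of the F(j), j < i, modulo the relations, so injectivity
says that every element z of the direct sum killed by the summation map to F(i) is a
relation.  Pick j maximal in the support of z; pseudo-projectivity puts z(j) into
Im_F(j) = sum of the images F(k<j), so subtracting a relation moves the j-component of z
onto finitely many indices k < j.  The multiset of indices of the support thereby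
decreases in the multiset extension of <, which is well-founded by DCC, so well-founded
induction shows that z is a relation.
\<close>

abbreviation supp :: "('p \<Rightarrow> 'm::zero) \<Rightarrow> 'p set" where
  "supp x \<equiv> {j. x j \<noteq> 0}"

definition dsum_map :: "('p::order \<Rightarrow> 'p \<Rightarrow> 'm::ab_group_add \<Rightarrow> 'm) \<Rightarrow> 'p \<Rightarrow> ('p \<Rightarrow> 'm) \<Rightarrow> 'm" where
  "dsum_map Fmap i x = (\<Sum>j\<in>supp x. Fmap j i (x j))"

lemma colim_map_eq: "colim_map Fmap i C = the_elem (dsum_map Fmap i ` C)"
  unfolding colim_map_def dsum_map_def ..

lemma wf_less_if_DCC: "DCC TYPE('p::order) \<Longrightarrow> wf {(a :: 'p, b). a < b}"
  unfolding DCC_def wf_iff_no_infinite_down_chain by auto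

lemma maxset_nonempty:
  fixes J :: "'p::order set"
  assumes "finite J" "J \<noteq> {}"
  shows "maxset J \<noteq> {}"
  using finite_has_maximal[OF assms] unfolding maxset_def by (auto simp: less_le)

locale module_functor =
  fixes scale :: "'r::comm_ring_1 \<Rightarrow> 'm::ab_group_add \<Rightarrow> 'm"
    and M :: "'p::order \<Rightarrow> 'm set"
    and Fmap :: "'p \<Rightarrow> 'p \<Rightarrow> 'm \<Rightarrow> 'm"
  assumes is_functor: "is_functor scale M Fmap"
begin

sublocale module scale
  using is_functor unfolding is_functor_def by simp

lemma subspace_M: "subspace (M j)"
  using is_functor unfolding is_functor_def by simp

lemma Fmap_in_M: "j \<le> k \<Longrightarrow> x \<in> M j \<Longrightarrow> Fmap j k x \<in> M k"
  and Fmap_add: "j \<le> k \<Longrightarrow> x \<in> M j \<Longrightarrow> y \<in> M j \<Longrightarrow> Fmap j k (x + y) = Fmap j k x + Fmap j k y"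
  and Fmap_scale: "j \<le> k \<Longrightarrow> x \<in> M j \<Longrightarrow> Fmap j k (scale c x) = scale c (Fmap j k x)"
  and Fmap_id: "x \<in> M j \<Longrightarrow> Fmap j j x = x"
  and Fmap_comp: "j \<le> k \<Longrightarrow> k \<le> l \<Longrightarrow> x \<in> M j \<Longrightarrow> Fmap k l (Fmap j k x) = Fmap j l x"
  using is_functor unfolding is_functor_def by simp_all

lemma Fmap_zero: "j \<le> k \<Longrightarrow> Fmap j k 0 = 0"
  using Fmap_add[of j k 0 0] subspace_0[OF subspace_M] by simp

lemma Fmap_neg: "j \<le> k \<Longrightarrow> x \<in> M j \<Longrightarrow> Fmap j k (- x) = - Fmap j k x"
  using Fmap_add[of j k x "- x"] subspace_neg[OF subspace_M] Fmap_zero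
  by (simp add: eq_neg_iff_add_eq_0 add.commute)

lemma dsum_ltD:
  assumes "x \<in> dsum_lt M i"
  shows dsum_lt_finite_supp: "finite (supp x)"
    and dsum_lt_in_M: "x j \<in> M j"
    and dsum_lt_supp_less: "j \<in> supp x \<Longrightarrow> j < i"
  using assms unfolding dsum_lt_def by auto

lemma dsum_lt_add: "x \<in> dsum_lt M i \<Longrightarrow> y \<in> dsum_lt M i \<Longrightarrow> (\<lambda>l. x l + y l) \<in> dsum_lt M i"
  unfolding dsum_lt_def
  by (auto intro: subspace_add[OF subspace_M] rev_finite_subset[of "supp x \<union> supp y"])

lemma dsum_lt_scale: "x \<in> dsum_lt M i \<Longrightarrow> (\<lambda>l. scale c (x l)) \<in> dsum_lt M i"
  unfolding dsum_lt_def
  by (auto intro: subspace_scale[OF subspace_M] rev_finite_subset[of "supp x"])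

lemma dsum_lt_diff: "x \<in> dsum_lt M i \<Longrightarrow> y \<in> dsum_lt M i \<Longrightarrow> (\<lambda>l. x l - y l) \<in> dsum_lt M i"
  using dsum_lt_add[of x i "\<lambda>l. scale (-1) (y l)"] dsum_lt_scale[of y i "-1"] by simp

lemma dsum_map_eq_sum:
  assumes "finite T" "supp x \<subseteq> T" "T \<subseteq> {j. j \<le> i}"
  shows "dsum_map Fmap i x = (\<Sum>j\<in>T. Fmap j i (x j))"
  unfolding dsum_map_def using assms Fmap_zero by (intro sum.mono_neutral_left) auto

lemma dsum_map_add:
  assumes x: "x \<in> dsum_lt M i" and y: "y \<in> dsum_lt M i"
  shows "dsum_map Fmap i (\<lambda>l. x l + y l) = dsum_map Fmap i x + dsum_map Fmap i y"
proof -
  let ?T = "supp x \<union> supp y"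
  have T: "finite ?T" "?T \<subseteq> {j. j \<le> i}"
    using dsum_ltD[OF x] dsum_ltD[OF y] by (auto intro: less_imp_le)
  have "dsum_map Fmap i (\<lambda>l. x l + y l) = (\<Sum>j\<in>?T. Fmap j i (x j + y j))"
    using T by (intro dsum_map_eq_sum) auto
  also have "\<dots> = (\<Sum>j\<in>?T. Fmap j i (x j) + Fmap j i (y j))"
    using T dsum_lt_in_M[OF x] dsum_lt_in_M[OF y] by (intro sum.cong refl Fmap_add) auto
  also have "\<dots> = dsum_map Fmap i x + dsum_map Fmap i y"
    using T by (simp add: sum.distrib dsum_map_eq_sum[of ?T x] dsum_map_eq_sum[of ?T y])
  finally show ?thesis .
qed

lemma dsum_map_scale:
  assumes x: "x \<in> dsum_lt M i"
  shows "dsum_map Fmap i (\<lambda>l. scale c (x l)) = scale c (dsum_map Fmap i x)"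
proof -
  have T: "finite (supp x)" "supp x \<subseteq> {j. j \<le> i}"
    using dsum_ltD[OF x] by (auto intro: less_imp_le)
  have "dsum_map Fmap i (\<lambda>l. scale c (x l)) = (\<Sum>j\<in>supp x. Fmap j i (scale c (x j)))"
    using T by (intro dsum_map_eq_sum) auto
  also have "\<dots> = (\<Sum>j\<in>supp x. scale c (Fmap j i (x j)))"
    using T dsum_lt_in_M[OF x] by (intro sum.cong refl Fmap_scale) auto
  finally show ?thesis
    by (simp add: scale_sum_right dsum_map_def)
qed

lemma dsum_map_diff:
  assumes "x \<in> dsum_lt M i" "y \<in> dsum_lt M i"
  shows "dsum_map Fmap i (\<lambda>l. x l - y l) = dsum_map Fmap i x - dsum_map Fmap i y"
  using dsum_map_add[OF assms(1) dsum_lt_scale[OF assms(2)], of "-1"]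
    dsum_map_scale[OF assms(2), of "-1"] by simp

lemma colim_rels_in_kernel:
  assumes "z \<in> colim_rels scale M Fmap i"
  shows "z \<in> dsum_lt M i \<and> dsum_map Fmap i z = 0"
  using assms
proof (induction rule: colim_rels.induct)
  case zero
  then show ?case by (simp add: dsum_lt_def subspace_0[OF subspace_M] dsum_map_def)
next
  case (gen j k v)
  let ?z = "\<lambda>l. delta j v l - delta k (Fmap j k v) l"
  have Fv: "Fmap j k v \<in> M k" using gen Fmap_in_M by blast
  have "?z \<in> dsum_lt M i"
    unfolding dsum_lt_def using gen Fv
    by (auto simp: delta_def intro: rev_finite_subset[of "{j, k}"] subspace_0[OF subspace_M]
        subspace_diff[OF subspace_M] subspace_neg[OF subspace_M])
  moreover have "dsum_map Fmap i ?z = 0"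
  proof (cases "j = k")
    case True
    then show ?thesis using gen Fmap_id by (simp add: delta_def dsum_map_def)
  next
    case False
    have "dsum_map Fmap i ?z = (\<Sum>l\<in>{j, k}. Fmap l i (?z l))"
      using gen by (intro dsum_map_eq_sum) (auto simp: delta_def)
    also have "\<dots> = Fmap j i v - Fmap k i (Fmap j k v)"
      using False gen Fv by (simp add: delta_def Fmap_neg)
    also have "\<dots> = 0" using gen Fmap_comp[of j k i v] by simp
    finally show ?thesis .
  qed
  ultimately show ?case by simp
next
  case (add z w)
  then show ?case using dsum_lt_add dsum_map_add by simp
next
  case (smult z c)
  then show ?case using dsum_lt_scale dsum_map_scale by simp
qed

lemma colim_rels_diff:
  assumes "z \<in> colim_rels scale M Fmap i" "w \<in> colim_rels scale M Fmap i"
  shows "(\<lambda>l. z l - w l) \<in> colim_rels scale M Fmap i"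
  using colim_rels.add[OF assms(1) colim_rels.smult[OF assms(2), of "-1"]] by simp

lemma colim_rels_sum:
  assumes "finite K" "\<And>k. k \<in> K \<Longrightarrow> f k \<in> colim_rels scale M Fmap i"
  shows "(\<lambda>l. \<Sum>k\<in>K. f k l) \<in> colim_rels scale M Fmap i"
  using assms by (induction K rule: finite_induct) (auto intro: colim_rels.intros)

lemma ImF_push_down:
  assumes "j < i" "v \<in> ImF M Fmap j"
  obtains w K where "w \<in> colim_rels scale M Fmap i" "w j = - v" "supp w \<subseteq> insert j K"
    "finite K" "K \<subseteq> {k. k < j}"
proof -
  obtain K y where v: "v = (\<Sum>k\<in>K. Fmap k j (y k))" and K: "finite K" "K \<subseteq> {k. k < j}"
    and y: "\<forall>k\<in>K. y k \<in> M k"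
    using assms(2) unfolding ImF_def by blast
  define w where "w = (\<lambda>l. \<Sum>k\<in>K. delta k (y k) l - delta j (Fmap k j (y k)) l)"
  have rel: "w \<in> colim_rels scale M Fmap i"
    unfolding w_def using K y assms(1)
    by (intro colim_rels_sum) (auto intro: colim_rels.gen less_imp_le)
  have w_eq: "w l = (if l \<in> K then y l else 0) - (if l = j then v else 0)" for l
    unfolding w_def v using K(1) by (simp add: sum_subtractf delta_def)
  have "j \<notin> K" using K(2) by auto
  then have "w j = - v" "supp w \<subseteq> insert j K" using w_eq by auto
  then show ?thesis by (rule that[OF rel _ _ K])
qed

lemma kernel_maximal_in_ImF:
  assumes "pseudo_projective_at M Fmap i"
    and z: "z \<in> dsum_lt M i" "dsum_map Fmap i z = 0"
    and "j \<in> maxset (supp z)"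
  shows "z j \<in> ImF M Fmap j"
proof -
  have "supp z \<subseteq> {j. j \<le> i}" using dsum_lt_supp_less[OF z(1)] by (auto intro: less_imp_le)
  then show ?thesis
    using assms(1) dsum_ltD(1,2)[OF z(1)] z(2) assms(4)
    unfolding pseudo_projective_at_def dsum_map_def by blast
qed

text \<open>The induction runs over a multiset A covering the support, so that the support of the
  pushed-down element only needs to be covered by a mult1-smaller multiset.\<close>

lemma kernel_subset_colim_rels:
  assumes dcc: "DCC TYPE('p)" and pp: "pseudo_projective_at M Fmap i"
    and z: "z \<in> dsum_lt M i" "dsum_map Fmap i z = 0"
  shows "z \<in> colim_rels scale M Fmap i"
proof -
  have "\<forall>z. z \<in> dsum_lt M i \<longrightarrow> dsum_map Fmap i z = 0 \<longrightarrow> supp z \<subseteq> set_mset A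
      \<longrightarrow> z \<in> colim_rels scale M Fmap i" for A
  proof (induction A rule: wf_induct[OF wf_mult1[OF wf_less_if_DCC[OF dcc]]])
    case (1 A)
    show ?case
    proof (intro allI impI)
      fix z assume z: "z \<in> dsum_lt M i" "dsum_map Fmap i z = 0" "supp z \<subseteq> set_mset A"
      show "z \<in> colim_rels scale M Fmap i"
      proof (cases "supp z = {}")
        case True
        then have "z = (\<lambda>_. 0)" by auto
        then show ?thesis using colim_rels.zero by simp
      next
        case False
        then obtain j where j: "j \<in> maxset (supp z)"
          using maxset_nonempty dsum_lt_finite_supp[OF z(1)] by blast
        then have "j < i" using dsum_lt_supp_less[OF z(1)] by (auto simp: maxset_def)
        then obtain w K where w: "w \<in> colim_rels scale M Fmap i" "w j = - z j"
          "supp w \<subseteq> insert j K" and K: "finite K" "K \<subseteq> {k. k < j}"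
          by (rule ImF_push_down[OF _ kernel_maximal_in_ImF[OF pp z(1,2) j]])
        define z' where "z' = (\<lambda>l. z l + w l)"
        have z'_kernel: "z' \<in> dsum_lt M i" "dsum_map Fmap i z' = 0"
          using colim_rels_in_kernel[OF w(1)] dsum_lt_add dsum_map_add z unfolding z'_def by auto
        have "j \<in># A" using j z(3) unfolding maxset_def by auto
        then obtain A0 where A: "A = add_mset j A0" by (metis multi_member_split)
        have "supp z' \<subseteq> set_mset (A0 + mset_set K)"
        proof
          fix l assume "l \<in> supp z'"
          then have "l \<noteq> j" "z l \<noteq> 0 \<or> w l \<noteq> 0" using w(2) by (auto simp: z'_def)
          then show "l \<in> set_mset (A0 + mset_set K)" using z(3) w(3) K(1) unfolding A by auto
        qed
        moreover have "(A0 + mset_set K, A) \<in> mult1 {(a, b). a < b}"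
          using K unfolding A by (intro mult1I[OF refl refl]) auto
        ultimately have "z' \<in> colim_rels scale M Fmap i" using "1" z'_kernel by blast
        from colim_rels_diff[OF this w(1)] show ?thesis unfolding z'_def by simp
      qed
    qed
  qed
  from this[of "mset_set (supp z)"] show ?thesis using z dsum_lt_finite_supp[OF z(1)] by simp
qed

lemma equiv_colim_equiv: "equiv (dsum_lt M i) (colim_equiv scale M Fmap i)"
proof (rule equivI)
  show "colim_equiv scale M Fmap i \<subseteq> dsum_lt M i \<times> dsum_lt M i"
    unfolding colim_equiv_def by auto
  show "refl_on (dsum_lt M i) (colim_equiv scale M Fmap i)"
    by (rule refl_onI) (auto simp: colim_equiv_def colim_rels.zero)
  show "sym (colim_equiv scale M Fmap i)"
  proof (rule symI)
    fix x y assume "(x, y) \<in> colim_equiv scale M Fmap i"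
    then have "(\<lambda>l. 0 - (x l - y l)) \<in> colim_rels scale M Fmap i"
      unfolding colim_equiv_def using colim_rels_diff[OF colim_rels.zero] by blast
    then show "(y, x) \<in> colim_equiv scale M Fmap i"
      using \<open>(x, y) \<in> colim_equiv scale M Fmap i\<close> unfolding colim_equiv_def by simp
  qed
  show "trans (colim_equiv scale M Fmap i)"
    using colim_rels.add by (fastforce intro!: transI simp: colim_equiv_def)
qed

lemma colim_map_class:
  assumes x: "x \<in> dsum_lt M i"
  shows "colim_map Fmap i (colim_equiv scale M Fmap i `` {x}) = dsum_map Fmap i x"
  unfolding colim_map_eq
proof (rule the_elem_image_unique)
  show "colim_equiv scale M Fmap i `` {x} \<noteq> {}"
    using equiv_class_self[OF equiv_colim_equiv x] by blast
next
  fix y assume "y \<in> colim_equiv scale M Fmap i `` {x}"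
  then have y: "y \<in> dsum_lt M i" and "(\<lambda>l. x l - y l) \<in> colim_rels scale M Fmap i"
    unfolding colim_equiv_def by auto
  then have "dsum_map Fmap i (\<lambda>l. x l - y l) = 0" using colim_rels_in_kernel by blast
  then show "dsum_map Fmap i y = dsum_map Fmap i x" using dsum_map_diff[OF x y] by simp
qed

end

theorem lemma6p2:
  fixes scale :: "'r::comm_ring_1 \<Rightarrow> 'm::ab_group_add \<Rightarrow> 'm"
    and M :: "'p::order \<Rightarrow> 'm set"
    and Fmap :: "'p \<Rightarrow> 'p \<Rightarrow> 'm \<Rightarrow> 'm"
    and i :: 'p
  assumes "DCC TYPE('p)"
    and "is_functor scale M Fmap"
    and "pseudo_projective_at M Fmap i"
  shows "inj_on (colim_map Fmap i) (colim_lt scale M Fmap i)"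
proof (rule inj_onI)
  interpret module_functor scale M Fmap by (rule module_functor.intro) fact
  let ?E = "colim_equiv scale M Fmap i"
  fix C D assume "C \<in> colim_lt scale M Fmap i" "D \<in> colim_lt scale M Fmap i"
    and eq: "colim_map Fmap i C = colim_map Fmap i D"
  then obtain x y where C: "C = ?E `` {x}" and D: "D = ?E `` {y}"
    and x: "x \<in> dsum_lt M i" and y: "y \<in> dsum_lt M i"
    unfolding colim_lt_def by (metis quotientE)
  have "dsum_map Fmap i (\<lambda>l. x l - y l) = 0"
    using eq colim_map_class[OF x] colim_map_class[OF y] dsum_map_diff[OF x y] unfolding C D by simp
  then have "(\<lambda>l. x l - y l) \<in> colim_rels scale M Fmap i"
    using kernel_subset_colim_rels[OF assms(1,3) dsum_lt_diff[OF x y]] by blast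
  then have "(x, y) \<in> ?E" using x y unfolding colim_equiv_def by simp
  then show "C = D" unfolding C D using equiv_class_eq[OF equiv_colim_equiv] by blast
qed

end
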